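(* Let $\rho\colon\mathcal{F}\to[\Lambda]^\omega$ with $\mathcal{F}\subseteq[\Omega]^\omega$ be a partition regular function. Consider the conditions: (1) $\mathrm{FinBW}(\rho)$ coincides with the class of all finite (Hausdorff) spaces; (2) $\omega+1\notin\mathrm{FinBW}(\rho)$, where the ordinal $\omega+1$ carries the order topology; (3) $\rho\notin P^-(\Lambda)$; (4) $\rho_{\mathrm{FIN}^2}\leq_K\rho$. Then (1), (2), (3) are equivalent and (4) implies them. If moreover $\rho\in(S_1)$, then all four conditions are equivalent.
   Context: All topological spaces are Hausdorff. An ideal on a nonempty set $X$ is a family $\mathcal{I}\subseteq\mathcal{P}(X)$ with $\emptyset\in\mathcal{I}$, $X\notin\mathcal{I}$, closed under finite unions and subsets, containing all finite subsets of $X$; $\mathcal{I}^+=\mathcal{P}(X)\setminus\mathcal{I}$. Partition regular function: $\Lambda,\Omega$ countably infinite, $\mathcal{F}$ a nonempty family of infinite subsets of $\Omega$ with $F\setminus K\in\mathcal{F}$ for $F\in\mathcal{F}$, $K$ finite; $\rho\colon\mathcal{F}\to[\Lambda]^\omega$ is partition regular if (M) $E\subseteq F\Rightarrow\rho(E)\subseteq\rho(F)$; (R) if $F\in\mathcal{F}$ and $\rho(F)=A\cup B$ then some $E\in\mathcal{F}$ has $\rho(E)\subseteq A$ or $\rho(E)\subseteq B$; (S) for every $E\in\mathcal{F}$ there is $F\in\mathcal{F}$, $F\subseteq E$, such that every $a\in\rho(F)$ satisfies $a\notin\rho(F\setminus K)$ for some finite $K\subseteq\Omega$. $\mathcal{I}_\rho=\{A\subseteq\Lambda:\forall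 F\in\mathcal{F}\ \rho(F)\not\subseteq A\}$. For an ideal $\mathcal{I}$ on $\Lambda$, $\rho_{\mathcal{I}}\colon\mathcal{I}^+\to[\Lambda]^\omega$, $\rho_{\mathcal{I}}(A)=A$ (with $\Omega=\Lambda$). $\rho$-convergence: for $f\colon\Lambda\to X$ and $F\in\mathcal{F}$, $f\restriction\rho(F)$ $\rho$-converges to $x\in X$ if for every neighborhood $U$ of $x$ there is a finite $K\subseteq\Omega$ with $f[\rho(F\setminus K)]\subseteq U$. $\mathrm{FinBW}(\rho)$ is the class of spaces $X$ such that for every $f\colon\Lambda\to X$ there is $F\in\mathcal{F}$ such that $f\restriction\rho(F)$ $\rho$-converges to some point of $X$. Katětov order: for partition regular $\rho_i\colon\mathcal{F}_i\to[\Lambda_i]^\omega$, $\mathcal{F}_i\subseteq[\Omega_i]^\omega$, write $\rho_2\leq_K\rho_1$ if there is $f\colon\Lambda_1\to\Lambda_2$ such that for every $F_1\in\mathcal{F}_1$ there is $F_2\in\mathcal{F}_2$ such that for every finite $K_1\subseteq\Omega_1$ there is a finite $K_2\subseteq\Omega_2$ with $\rho_2(F_2\setminus K_2)\subseteq f[\rho_1(F_1\setminus K_1)]$. $\mathrm{FIN}^2$ is the ideal on $\omega\times\omega$: $A\in\mathrm{FIN}^2$ iff there is $i_0$ such that $\{j:(i,j)\in A\}$ is finite for all $i\geq i_0$. $\rho\in P^-(\Lambda)$ means: for every decreasing sequence $\Lambda=A_0\supseteq A_1\supseteq\dots$ with $A_n\setminus A_{n+1}\in\mathcal{I}_\rho$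 for all $n$, there is $F\in\mathcal{F}$ such that for each $n$ there is a finite $K\subseteq\Omega$ with $\rho(F\setminus K)\subseteq A_n$. $\rho\in(S_1)$ means: for every $E\in\mathcal{F}$ there is $F\in\mathcal{F}$, $F\subseteq E$, such that for every $A\in\mathcal{I}_\rho$ there is $G\in\mathcal{F}$ with $\rho(G)\subseteq\rho(F)\setminus A$ and for every finite $K\subseteq\Omega$ there is a finite $L\subseteq\Omega$ with $\rho(G\setminus L)\subseteq\rho(F\setminus K)$. *)

theory Defs
  imports "HOL-Analysis.Analysis" "HOL-Library.Extended_Real"
begin

text \<open>Lambda = UNIV :: 'l set, Omega = UNIV :: 'o set (countably infinite types);
  the family F :: 'o set set and rho :: 'o set => 'l set.\<close>

definition partition_regular :: "'o set set \<Rightarrow> ('o set \<Rightarrow> 'l set) \<Rightarrow> bool" where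
  "partition_regular FF \<rho> \<longleftrightarrow>
     FF \<noteq> {} \<and> (\<forall>F\<in>FF. infinite F) \<and>
     (\<forall>F\<in>FF. \<forall>K. finite K \<longrightarrow> F - K \<in> FF) \<and>
     (\<forall>F\<in>FF. infinite (\<rho> F)) \<and>
     (\<forall>E\<in>FF. \<forall>F\<in>FF. E \<subseteq> F \<longrightarrow> \<rho> E \<subseteq> \<rho> F) \<and>
     (\<forall>F\<in>FF. \<forall>A B. \<rho> F = A \<union> B \<longrightarrow> (\<exists>E\<in>FF. \<rho> E \<subseteq> A \<or> \<rho> E \<subseteq> B)) \<and>
     (\<forall>E\<in>FF. \<exists>F\<in>FF. F \<subseteq> E \<and> (\<forall>a\<in>\<rho> F. \<exists>K. finite K \<and> a \<notin> \<rho> (F - K)))"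

definition ideal_of :: "'o set set \<Rightarrow> ('o set \<Rightarrow> 'l set) \<Rightarrow> 'l set set" where
  "ideal_of FF \<rho> = {A. \<forall>F\<in>FF. \<not> \<rho> F \<subseteq> A}"

definition rho_converges ::
  "'o set set \<Rightarrow> ('o set \<Rightarrow> 'l set) \<Rightarrow> 'x topology \<Rightarrow> ('l \<Rightarrow> 'x) \<Rightarrow> 'o set \<Rightarrow> 'x \<Rightarrow> bool" where
  "rho_converges FF \<rho> X f F x \<longleftrightarrow>
     (\<forall>U. openin X U \<and> x \<in> U \<longrightarrow> (\<exists>K. finite K \<and> f ` \<rho> (F - K) \<subseteq> U))"

definition FinBW :: "'o set set \<Rightarrow> ('o set \<Rightarrow> 'l set) \<Rightarrow> 'x topology \<Rightarrow> bool" where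
  "FinBW FF \<rho> X \<longleftrightarrow>
     (\<forall>f. f ` UNIV \<subseteq> topspace X \<longrightarrow>
        (\<exists>F\<in>FF. \<exists>x\<in>topspace X. rho_converges FF \<rho> X f F x))"

definition katetov_le ::
  "'o2 set set \<Rightarrow> ('o2 set \<Rightarrow> 'l2 set) \<Rightarrow> 'o1 set set \<Rightarrow> ('o1 set \<Rightarrow> 'l1 set) \<Rightarrow> bool" where
  "katetov_le FF2 \<rho>2 FF1 \<rho>1 \<longleftrightarrow>
     (\<exists>f :: 'l1 \<Rightarrow> 'l2. \<forall>F1\<in>FF1. \<exists>F2\<in>FF2. \<forall>K1. finite K1 \<longrightarrow>
        (\<exists>K2. finite K2 \<and> \<rho>2 (F2 - K2) \<subseteq> f ` \<rho>1 (F1 - K1)))"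

definition FIN2 :: "(nat \<times> nat) set set" where
  "FIN2 = {A. \<exists>i0. \<forall>i\<ge>i0. finite {j. (i, j) \<in> A}}"

text \<open>rho_FIN2 : FIN2^+ -> [omega x omega]^omega, the identity.\<close>
definition FIN2_plus :: "(nat \<times> nat) set set" where
  "FIN2_plus = {A. A \<notin> FIN2}"

definition P_minus :: "'o set set \<Rightarrow> ('o set \<Rightarrow> 'l set) \<Rightarrow> bool" where
  "P_minus FF \<rho> \<longleftrightarrow>
     (\<forall>A :: nat \<Rightarrow> 'l set. A 0 = UNIV \<and> (\<forall>n. A (Suc n) \<subseteq> A n) \<and>
        (\<forall>n. A n - A (Suc n) \<in> ideal_of FF \<rho>) \<longrightarrow>
        (\<exists>F\<in>FF. \<forall>n. \<exists>K. finite K \<and> \<rho> (F - K) \<subseteq> A n))"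

definition S1 :: "'o set set \<Rightarrow> ('o set \<Rightarrow> 'l set) \<Rightarrow> bool" where
  "S1 FF \<rho> \<longleftrightarrow>
     (\<forall>E\<in>FF. \<exists>F\<in>FF. F \<subseteq> E \<and>
        (\<forall>A\<in>ideal_of FF \<rho>. \<exists>G\<in>FF. \<rho> G \<subseteq> \<rho> F - A \<and>
           (\<forall>K. finite K \<longrightarrow> (\<exists>L. finite L \<and> \<rho> (G - L) \<subseteq> \<rho> (F - K)))))"

end

theory Submission
  imports Defs
begin

text \<open>
  Everything runs through maps g from Lambda into omega+1 (modelled by enat) that no rho(F)
  follows: every finite level of g is rho-small and no rho(F) eventually climbs through all
  levels. Such maps are exactly what the failure of omega+1 in FinBW(rho) provides, and their
  upper level sets are exactly the decreasing sequences refuting P-minus (conversely, the depth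
  of a point in such a sequence is such a map). Composing such a map, made finite-valued, with a
  sequence of points having pairwise disjoint neighbourhoods shows that no infinite Hausdorff
  space lies in FinBW(rho), while finite spaces always do by (R); an infinite Hausdorff copy of
  omega+1 gives the converse. A Katetov reduction f of rho_FIN2 to rho yields such a map, namely
  the first coordinate of f. Conversely, under (S1) every F can be refined inside the levels
  above k, where one picks infinitely many points escaping every finite set; sending each point
  to the pair (its level, its code) turns these points into a set in FIN2-plus that witnesses
  the reduction.
\<close>

section \<open>Topology\<close>

lemma Hausdorff_space_euclidean_t2_space: "Hausdorff_space (euclidean :: 'a::t2_space topology)"
  unfolding Hausdorff_space_def disjnt_def by (metis hausdorff open_openin)

lemma Hausdorff_space_infinite_openin_split:
  assumes X: "Hausdorff_space X" and W: "openin X W" "infinite W"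
  obtains N W' where "openin X N" "N \<noteq> {}" "N \<subseteq> W"
    "openin X W'" "infinite W'" "W' \<subseteq> W" "N \<inter> W' = {}"
proof -
  obtain p where p: "p \<in> W" using W(2) infinite_imp_nonempty by blast
  have "infinite (W - {p})" using W(2) by simp
  then obtain q where "q \<in> W - {p}" using infinite_imp_nonempty by blast
  then have q: "q \<in> W" "q \<noteq> p" by simp_all
  have "W \<subseteq> topspace X" using W(1) by (rule openin_subset)
  then obtain U V where UV: "openin X U" "openin X V" "p \<in> U" "q \<in> V" "U \<inter> V = {}"
    using X[unfolded Hausdorff_space_def, rule_format, of p q] p q unfolding disjnt_def by auto
  show thesis
  proof (cases "finite (U \<inter> W)")
    case True
    then have "closedin X (U \<inter> W)"
      using \<open>W \<subseteq> topspace X\<close> by (intro closedin_Hausdorff_finite[OF X]) auto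
    then have "openin X (W - U \<inter> W)" using W(1) by (simp add: openin_diff)
    moreover have "infinite (W - U \<inter> W)" using True W(2) by simp
    moreover have "openin X (U \<inter> W)" "U \<inter> W \<noteq> {}" using UV(1,3) W(1) p by auto
    ultimately show thesis by (intro that[of "U \<inter> W" "W - U \<inter> W"]) auto
  next
    case False
    moreover have "openin X (V \<inter> W)" "V \<inter> W \<noteq> {}" "openin X (U \<inter> W)"
      using UV(1,2,4) W(1) q by auto
    ultimately show thesis using UV(5) by (intro that[of "V \<inter> W" "U \<inter> W"]) auto
  qed
qed

text \<open>Split off disjoint open sets one at a time, keeping an infinite open remainder.\<close>
lemma Hausdorff_space_disjoint_open_sequence:
  assumes "Hausdorff_space X" "infinite (topspace X)"
  obtains N :: "nat \<Rightarrow> 'a set" where "\<And>n. openin X (N n)" "\<And>n. N n \<noteq> {}" "disjoint_family N"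
proof -
  define P where "P = (\<lambda>(N, W). openin X N \<and> N \<noteq> {} \<and> openin X W \<and> infinite W \<and> N \<inter> W = {})"
  have split: "\<exists>NW'. P NW' \<and> fst NW' \<subseteq> W \<and> snd NW' \<subseteq> W" if W: "openin X W" "infinite W" for W
  proof -
    obtain N W' where "openin X N" "N \<noteq> {}" "N \<subseteq> W" "openin X W'" "infinite W'" "W' \<subseteq> W" "N \<inter> W' = {}"
      using Hausdorff_space_infinite_openin_split[OF assms(1) W] .
    then show ?thesis by (intro exI[of _ "(N, W')"]) (simp add: P_def)
  qed
  have "\<exists>NW. \<forall>n. P (NW n) \<and> fst (NW (Suc n)) \<subseteq> snd (NW n) \<and> snd (NW (Suc n)) \<subseteq> snd (NW n)"
  proof (rule dependent_nat_choice)
    show "\<exists>NW. P NW" using split[OF openin_topspace assms(2)] by blast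
    fix NW :: "'a set \<times> 'a set" assume "P NW"
    then have "openin X (snd NW)" "infinite (snd NW)" by (auto simp: P_def split: prod.splits)
    then show "\<exists>NW'. P NW' \<and> fst NW' \<subseteq> snd NW \<and> snd NW' \<subseteq> snd NW" by (rule split)
  qed
  then obtain NW where NW: "\<And>n. P (NW n)"
    and nested: "\<And>n. fst (NW (Suc n)) \<subseteq> snd (NW n)" "\<And>n. snd (NW (Suc n)) \<subseteq> snd (NW n)"
    by blast
  define N W where "N n = fst (NW n)" and "W n = snd (NW n)" for n
  have N_W: "openin X (N n)" "N n \<noteq> {}" "N n \<inter> W n = {}" for n
    using NW[of n] by (simp_all add: P_def N_def W_def split: prod.splits)
  have "decseq W" unfolding decseq_Suc_iff W_def using nested(2) by blast
  have later: "N m \<subseteq> W n" if "n < m" for m n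
  proof -
    obtain k where "m = Suc k" "n \<le> k" using \<open>n < m\<close> by (cases m) auto
    then show ?thesis using nested(1)[of k] \<open>decseq W\<close> by (auto simp: N_def W_def decseq_def)
  qed
  have "N m \<inter> N n = {}" if "n < m" for m n
    using later[OF that] N_W(3)[of n] by blast
  then have "N m \<inter> N n = {}" if "m \<noteq> n" for m n
    using that by (metis Int_commute linorder_neqE_nat)
  then have "disjoint_family N" unfolding disjoint_family_on_def by blast
  with N_W(1,2) show thesis by (rule that)
qed

lemma Hausdorff_space_separated_sequence:
  assumes "Hausdorff_space X" "infinite (topspace X)"
  obtains N :: "nat \<Rightarrow> 'a set" and x where "\<And>n. openin X (N n)" "\<And>m n. x m \<in> N n \<longleftrightarrow> m = n"
proof -
  obtain N :: "nat \<Rightarrow> 'a set" where N: "\<And>n. openin X (N n)" "\<And>n. N n \<noteq> {}" "disjoint_family N"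
    using Hausdorff_space_disjoint_open_sequence[OF assms] by blast
  define x where "x n = (SOME y. y \<in> N n)" for n
  have "x n \<in> N n" for n using N(2)[of n] unfolding x_def by (simp add: some_in_eq)
  then have "x m \<in> N n \<longleftrightarrow> m = n" for m n using N(3) unfolding disjoint_family_on_def by blast
  with N(1) show thesis by (rule that)
qed

lemma FinBW_continuous_image:
  fixes X :: "'a topology" and Y :: "'b topology" and \<rho> :: "'o set \<Rightarrow> 'l set"
  assumes "continuous_map X Y g" "g ` topspace X = topspace Y" "FinBW FF \<rho> X"
  shows "FinBW FF \<rho> Y"
  unfolding FinBW_def
proof (intro allI impI)
  fix f :: "'l \<Rightarrow> 'b" assume "f ` UNIV \<subseteq> topspace Y"
  then have "f a \<in> g ` topspace X" for a using assms(2) by auto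
  then have "\<forall>a. \<exists>z. z \<in> topspace X \<and> g z = f a" by (metis imageE)
  then obtain f' where f': "\<And>a. f' a \<in> topspace X" "\<And>a. g (f' a) = f a"
    by (auto dest!: choice)
  obtain F x where F: "F \<in> FF" "x \<in> topspace X" and conv: "rho_converges FF \<rho> X f' F x"
    using assms(3) f'(1) unfolding FinBW_def by blast
  have "rho_converges FF \<rho> Y f F (g x)"
    unfolding rho_converges_def
  proof (intro allI impI)
    fix U assume U: "openin Y U \<and> g x \<in> U"
    then have "openin X {z \<in> topspace X. g z \<in> U}" using assms(1) by (simp add: continuous_map_def)
    then obtain K where "finite K" "f' ` \<rho> (F - K) \<subseteq> {z \<in> topspace X. g z \<in> U}"
      using conv F(2) U unfolding rho_converges_def by blast
    then show "\<exists>K. finite K \<and> f ` \<rho> (F - K) \<subseteq> U" using f'(2) by (auto simp: image_subset_iff)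
  qed
  then show "\<exists>F\<in>FF. \<exists>y\<in>topspace Y. rho_converges FF \<rho> Y f F y"
    using F assms(2) by blast
qed

lemma FinBW_homeomorphic_space:
  "X homeomorphic_space Y \<Longrightarrow> FinBW FF \<rho> X \<Longrightarrow> FinBW FF \<rho> Y"
  unfolding homeomorphic_space
  by (metis FinBW_continuous_image homeomorphic_imp_continuous_map homeomorphic_imp_surjective_map)

lemma homeomorphic_space_pullback_inv:
  assumes "inj e"
  shows "T homeomorphic_space pullback_topology (range e) (inv e) T"
proof -
  have "homeomorphic_maps T (pullback_topology (range e) (inv e) T) e (inv e)"
    unfolding homeomorphic_maps_def
  proof (intro conjI)
    show "continuous_map T (pullback_topology (range e) (inv e) T) e"
      using assms by (intro continuous_map_pullback') auto
    show "continuous_map (pullback_topology (range e) (inv e) T) T (inv e)"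
      using continuous_map_pullback[OF continuous_map_id] by (simp add: comp_def)
  qed (auto simp: assms topspace_pullback_topology f_inv_into_f)
  then show ?thesis unfolding homeomorphic_space_def by blast
qed

lemma infinite_Hausdorff_copy_of_enat:
  assumes "infinite (UNIV :: 'x set)"
  obtains X :: "'x topology"
  where "Hausdorff_space X" "infinite (topspace X)" "(euclidean :: enat topology) homeomorphic_space X"
proof -
  obtain s :: "nat \<Rightarrow> 'x" where "inj s" using infinite_countable_subset[OF assms] by blast
  define e :: "enat \<Rightarrow> 'x" where "e = s \<circ> to_nat"
  have "inj e" unfolding e_def using \<open>inj s\<close> inj_to_nat by (rule inj_compose)
  define X where "X = pullback_topology (range e) (inv e) (euclidean :: enat topology)"
  have hom: "(euclidean :: enat topology) homeomorphic_space X"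
    unfolding X_def using \<open>inj e\<close> by (rule homeomorphic_space_pullback_inv)
  have "infinite (range e)" using \<open>inj e\<close> finite_imageD infinite_UNIV_char_0 by blast
  then have "infinite (topspace X)" by (simp add: X_def topspace_pullback_topology)
  then show thesis
    using that hom homeomorphic_Hausdorff_space Hausdorff_space_euclidean_t2_space by blast
qed

section \<open>Convergence into omega+1\<close>

lemma rho_converges_enat_iff:
  "rho_converges FF \<rho> euclidean g F (enat m) \<longleftrightarrow> (\<exists>K. finite K \<and> \<rho> (F - K) \<subseteq> g -` {enat m})"
proof
  assume "rho_converges FF \<rho> euclidean g F (enat m)"
  then obtain K where "finite K" "g ` \<rho> (F - K) \<subseteq> {enat m}"
    using open_enat[of m] unfolding rho_converges_def by (auto elim!: allE[of _ "{enat m}"])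
  then show "\<exists>K. finite K \<and> \<rho> (F - K) \<subseteq> g -` {enat m}" by blast
next
  assume "\<exists>K. finite K \<and> \<rho> (F - K) \<subseteq> g -` {enat m}"
  then obtain K where K: "finite K" "\<rho> (F - K) \<subseteq> g -` {enat m}" by blast
  show "rho_converges FF \<rho> euclidean g F (enat m)"
    unfolding rho_converges_def
  proof (intro allI impI)
    fix U assume "openin euclidean U \<and> enat m \<in> U"
    then have "g -` {enat m} \<subseteq> g -` U" by auto
    then show "\<exists>K. finite K \<and> g ` \<rho> (F - K) \<subseteq> U" using K by blast
  qed
qed

lemma rho_converges_infinity_iff:
  "rho_converges FF \<rho> euclidean g F \<infinity> \<longleftrightarrow> (\<forall>n. \<exists>K. finite K \<and> \<rho> (F - K) \<subseteq> {a. enat n \<le> g a})"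
proof
  assume conv: "rho_converges FF \<rho> euclidean g F \<infinity>"
  show "\<forall>n. \<exists>K. finite K \<and> \<rho> (F - K) \<subseteq> {a. enat n \<le> g a}"
  proof
    fix n
    have "open {enat n<..}" "\<infinity> \<in> {enat n<..}" by simp_all
    then obtain K where "finite K" "g ` \<rho> (F - K) \<subseteq> {enat n<..}"
      using conv[unfolded rho_converges_def, rule_format, of "{enat n<..}"] by auto
    then have "\<rho> (F - K) \<subseteq> {a. enat n \<le> g a}" by (auto simp: image_subset_iff less_imp_le)
    then show "\<exists>K. finite K \<and> \<rho> (F - K) \<subseteq> {a. enat n \<le> g a}" using \<open>finite K\<close> by blast
  qed
next
  assume levels: "\<forall>n. \<exists>K. finite K \<and> \<rho> (F - K) \<subseteq> {a. enat n \<le> g a}"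
  show "rho_converges FF \<rho> euclidean g F \<infinity>"
    unfolding rho_converges_def
  proof (intro allI impI)
    fix U :: "enat set" assume "openin euclidean U \<and> \<infinity> \<in> U"
    then obtain m :: nat where m: "{enat m<..} \<subseteq> U" using open_enat_iff[of U] by auto
    obtain K where "finite K" "\<rho> (F - K) \<subseteq> {a. enat (Suc m) \<le> g a}" using levels by blast
    moreover have "{a. enat (Suc m) \<le> g a} \<subseteq> g -` U" using m by (auto simp: Suc_ile_eq)
    ultimately show "\<exists>K. finite K \<and> g ` \<rho> (F - K) \<subseteq> U" by blast
  qed
qed

definition seq_depth :: "(nat \<Rightarrow> 'a set) \<Rightarrow> 'a \<Rightarrow> enat" where
  "seq_depth A a = (if \<forall>n. a \<in> A n then \<infinity> else enat (LEAST n. a \<notin> A (Suc n)))"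

lemma enat_le_seq_depth_iff:
  assumes "A 0 = UNIV" "decseq A"
  shows "enat n \<le> seq_depth A a \<longleftrightarrow> a \<in> A n"
proof (cases "\<forall>n. a \<in> A n")
  case True
  then show ?thesis by (simp add: seq_depth_def)
next
  case False
  then obtain m where "a \<notin> A m" by blast
  with assms(1) obtain m' where "a \<notin> A (Suc m')" by (cases m) auto
  define d where "d = (LEAST n. a \<notin> A (Suc n))"
  have out: "a \<notin> A (Suc d)" unfolding d_def by (rule LeastI) fact
  have inside: "a \<in> A k" if "k \<le> d" for k
  proof (cases k)
    case 0
    then show ?thesis using assms(1) by simp
  next
    case (Suc k')
    then show ?thesis using that not_less_Least[of k' "\<lambda>n. a \<notin> A (Suc n)"] by (simp add: d_def)
  qed
  have "a \<in> A n \<longleftrightarrow> n \<le> d"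
  proof
    assume "a \<in> A n"
    show "n \<le> d"
    proof (rule ccontr)
      assume "\<not> n \<le> d"
      then have "A n \<subseteq> A (Suc d)" using assms(2) by (simp add: decseq_def)
      then show False using \<open>a \<in> A n\<close> out by blast
    qed
  qed (rule inside)
  then show ?thesis unfolding seq_depth_def if_not_P[OF False] d_def[symmetric] by simp
qed

lemma level_sets_diff_eq_fiber:
  "{a. enat n \<le> g a} - {a. enat (Suc n) \<le> g a} = g -` {enat n}"
proof -
  have "enat n \<le> x \<and> \<not> enat (Suc n) \<le> x \<longleftrightarrow> x = enat n" for x by (cases x) auto
  then show ?thesis by auto
qed

lemma FIN2_plus_iff: "Z \<in> FIN2_plus \<longleftrightarrow> (\<forall>i0. \<exists>i\<ge>i0. infinite {j. (i, j) \<in> Z})"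
  by (auto simp: FIN2_plus_def FIN2_def)

lemma not_FIN2_plus_if_cofinitely_off_columns:
  assumes "\<And>i. i \<ge> i0 \<Longrightarrow> \<exists>K. finite K \<and> (\<forall>p\<in>Z - K. fst p \<noteq> i)"
  shows "Z \<notin> FIN2_plus"
proof -
  have "finite {j. (i, j) \<in> Z}" if i: "i \<ge> i0" for i
  proof -
    obtain K where K: "finite K" "\<forall>p\<in>Z - K. fst p \<noteq> i" using assms[OF i] by blast
    then have "{j. (i, j) \<in> Z} \<subseteq> snd ` K" by force
    then show ?thesis using K(1) finite_subset by blast
  qed
  then show ?thesis unfolding FIN2_plus_iff by blast
qed

lemma FIN2_plus_if_infinite_blocks:
  assumes "\<And>k. infinite (Z k)" "\<And>k. fst ` Z k \<subseteq> {k..<b k}"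
  shows "(\<Union>k. Z k) \<in> FIN2_plus"
  unfolding FIN2_plus_iff
proof
  fix i0
  let ?column = "\<lambda>i. {j. (i, j) \<in> (\<Union>k. Z k)}"
  have cover: "Z i0 \<subseteq> (\<Union>i\<in>{i0..<b i0}. {i} \<times> ?column i)" using assms(2)[of i0] by force
  show "\<exists>i\<ge>i0. infinite (?column i)"
  proof (rule ccontr)
    assume "\<not> (\<exists>i\<ge>i0. infinite (?column i))"
    then have "finite (\<Union>i\<in>{i0..<b i0}. {i} \<times> ?column i)" by (intro finite_UN_I) auto
    then show False using cover assms(1)[of i0] finite_subset by blast
  qed
qed

definition initial_segment :: "nat \<Rightarrow> 'a::countable set" where
  "initial_segment j = {x. to_nat x < j}"

lemma finite_initial_segment: "finite (initial_segment j :: 'a::countable set)"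
proof -
  have "initial_segment j = (to_nat -` {..<j} :: 'a set)" by (auto simp: initial_segment_def)
  moreover have "finite (to_nat -` {..<j} :: 'a set)" by (rule finite_vimageI) (simp_all add: inj_to_nat)
  ultimately show ?thesis by simp
qed

lemma initial_segment_mono: "i \<le> j \<Longrightarrow> initial_segment i \<subseteq> initial_segment j"
  by (auto simp: initial_segment_def)

lemma finite_subset_initial_segment:
  assumes "finite K"
  obtains j where "K \<subseteq> initial_segment j"
proof -
  obtain j where "\<forall>x\<in>K. to_nat x < j"
    using finite_nat_bounded[OF finite_imageI[OF assms, of to_nat]] by auto
  then show thesis using that by (auto simp: initial_segment_def)
qed

section \<open>Partition regular functions\<close>

lemma ideal_of_subset: "B \<in> ideal_of FF \<rho> \<Longrightarrow> A \<subseteq> B \<Longrightarrow> A \<in> ideal_of FF \<rho>"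
  unfolding ideal_of_def by blast

locale partition_regular_fun =
  fixes FF :: "'o::countable set set" and \<rho> :: "'o set \<Rightarrow> 'l::countable set"
  assumes partition_regular: "partition_regular FF \<rho>"
begin

definition escaping :: "'o set \<Rightarrow> bool" where
  "escaping F \<longleftrightarrow> (\<forall>a\<in>\<rho> F. \<exists>K. finite K \<and> a \<notin> \<rho> (F - K))"

lemma
  shows FF_nonempty: "FF \<noteq> {}"
    and rho_infinite: "F \<in> FF \<Longrightarrow> infinite (\<rho> F)"
    and diff_finite_in_FF: "F \<in> FF \<Longrightarrow> finite K \<Longrightarrow> F - K \<in> FF"
    and rho_mono: "E \<in> FF \<Longrightarrow> F \<in> FF \<Longrightarrow> E \<subseteq> F \<Longrightarrow> \<rho> E \<subseteq> \<rho> F"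
    and rho_Un_cases: "F \<in> FF \<Longrightarrow> \<rho> F = A \<union> B \<Longrightarrow> \<exists>E\<in>FF. \<rho> E \<subseteq> A \<or> \<rho> E \<subseteq> B"
    and escaping_subset: "E \<in> FF \<Longrightarrow> \<exists>F\<in>FF. F \<subseteq> E \<and> escaping F"
  using partition_regular unfolding partition_regular_def escaping_def by simp_all

lemma rho_diff_mono: "F \<in> FF \<Longrightarrow> finite L \<Longrightarrow> K \<subseteq> L \<Longrightarrow> \<rho> (F - L) \<subseteq> \<rho> (F - K)"
  by (intro rho_mono diff_finite_in_FF) (auto intro: finite_subset)

lemma rho_diff_subset: "F \<in> FF \<Longrightarrow> finite K \<Longrightarrow> \<rho> (F - K) \<subseteq> \<rho> F"
  using rho_diff_mono[of F K "{}"] by simp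

lemma empty_in_ideal_of: "{} \<in> ideal_of FF \<rho>"
  unfolding ideal_of_def using rho_infinite by fastforce

lemma ideal_of_Un:
  assumes "A \<in> ideal_of FF \<rho>" "B \<in> ideal_of FF \<rho>"
  shows "A \<union> B \<in> ideal_of FF \<rho>"
  unfolding ideal_of_def
proof (intro CollectI ballI notI)
  fix F assume F: "F \<in> FF" "\<rho> F \<subseteq> A \<union> B"
  then have split: "\<rho> F = (\<rho> F \<inter> A) \<union> (\<rho> F \<inter> B)" by blast
  obtain E where "E \<in> FF" "\<rho> E \<subseteq> \<rho> F \<inter> A \<or> \<rho> E \<subseteq> \<rho> F \<inter> B"
    using rho_Un_cases[OF F(1) split] by blast
  then show False using assms unfolding ideal_of_def by blast
qed

lemma not_in_ideal_of_iff: "S \<notin> ideal_of FF \<rho> \<longleftrightarrow> (\<exists>F\<in>FF. \<exists>K. finite K \<and> \<rho> (F - K) \<subseteq> S)"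
proof
  assume "S \<notin> ideal_of FF \<rho>"
  then obtain F where "F \<in> FF" "\<rho> F \<subseteq> S" unfolding ideal_of_def by blast
  then show "\<exists>F\<in>FF. \<exists>K. finite K \<and> \<rho> (F - K) \<subseteq> S"
    by (intro bexI[of _ F] exI[of _ "{}"]) simp_all
next
  assume "\<exists>F\<in>FF. \<exists>K. finite K \<and> \<rho> (F - K) \<subseteq> S"
  then obtain F K where "F \<in> FF" "finite K" "\<rho> (F - K) \<subseteq> S" by blast
  then show "S \<notin> ideal_of FF \<rho>" using diff_finite_in_FF unfolding ideal_of_def by blast
qed

lemma finite_image_monochromatic:
  assumes "finite S" "F \<in> FF" "f ` \<rho> F \<subseteq> S"
  shows "\<exists>E\<in>FF. \<exists>x\<in>S. f ` \<rho> E \<subseteq> {x}"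
  using assms
proof (induction S arbitrary: F rule: finite_induct)
  case empty
  then have "\<rho> F = {}" by blast
  then show ?case using rho_infinite[OF empty.prems(1)] by simp
next
  case (insert x S)
  have split: "\<rho> F = (\<rho> F \<inter> f -` {x}) \<union> (\<rho> F \<inter> f -` S)" using insert.prems(2) by blast
  obtain E where E: "E \<in> FF" "\<rho> E \<subseteq> \<rho> F \<inter> f -` {x} \<or> \<rho> E \<subseteq> \<rho> F \<inter> f -` S"
    using rho_Un_cases[OF insert.prems(1) split] by blast
  show ?case
  proof (cases "\<rho> E \<subseteq> f -` {x}")
    case True
    then have "f ` \<rho> E \<subseteq> {x}" by blast
    then show ?thesis using E(1) by blast
  next
    case False
    then have "f ` \<rho> E \<subseteq> S" using E(2) by blast
    then show ?thesis using insert.IH[OF E(1)] by blast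
  qed
qed

lemma FinBW_finite_topspace:
  assumes "finite (topspace X)"
  shows "FinBW FF \<rho> X"
  unfolding FinBW_def
proof (intro allI impI)
  fix f :: "'l \<Rightarrow> 'a" assume "f ` UNIV \<subseteq> topspace X"
  moreover obtain F where "F \<in> FF" using FF_nonempty by blast
  ultimately obtain E x where E: "E \<in> FF" "x \<in> topspace X" "f ` \<rho> E \<subseteq> {x}"
    using finite_image_monochromatic[OF assms] by blast
  then have "rho_converges FF \<rho> X f E x"
    unfolding rho_converges_def by (intro allI impI exI[of _ "{}"]) auto
  then show "\<exists>F\<in>FF. \<exists>x\<in>topspace X. rho_converges FF \<rho> X f F x" using E by blast
qed

text \<open>The upper level sets of g play the role of the decreasing sequences in P-minus.\<close>
definition divergent_level_map :: "('l \<Rightarrow> enat) \<Rightarrow> bool" where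
  "divergent_level_map g \<longleftrightarrow> (\<forall>n. g -` {enat n} \<in> ideal_of FF \<rho>) \<and>
     \<not> (\<exists>F\<in>FF. \<forall>n. \<exists>K. finite K \<and> \<rho> (F - K) \<subseteq> {a. enat n \<le> g a})"

lemma nowhere_rho_convergent_iff_divergent_level_map:
  "(\<forall>F\<in>FF. \<forall>x. \<not> rho_converges FF \<rho> euclidean g F x) \<longleftrightarrow> divergent_level_map g"
proof
  assume nowhere: "\<forall>F\<in>FF. \<forall>x. \<not> rho_converges FF \<rho> euclidean g F x"
  have "g -` {enat n} \<in> ideal_of FF \<rho>" for n
  proof -
    have "\<forall>F\<in>FF. \<not> (\<exists>K. finite K \<and> \<rho> (F - K) \<subseteq> g -` {enat n})"
      using nowhere unfolding rho_converges_enat_iff[where FF=FF, symmetric] by blast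
    then show ?thesis using not_in_ideal_of_iff[of "g -` {enat n}"] by blast
  qed
  moreover have "\<not> (\<exists>F\<in>FF. \<forall>n. \<exists>K. finite K \<and> \<rho> (F - K) \<subseteq> {a. enat n \<le> g a})"
  proof
    assume "\<exists>F\<in>FF. \<forall>n. \<exists>K. finite K \<and> \<rho> (F - K) \<subseteq> {a. enat n \<le> g a}"
    then obtain F where "F \<in> FF" "rho_converges FF \<rho> euclidean g F \<infinity>"
      unfolding rho_converges_infinity_iff by blast
    then show False using nowhere by blast
  qed
  ultimately show "divergent_level_map g" unfolding divergent_level_map_def by blast
next
  assume "divergent_level_map g"
  then have fibers: "\<And>n. g -` {enat n} \<in> ideal_of FF \<rho>"
    and unbounded: "\<not> (\<exists>F\<in>FF. \<forall>n. \<exists>K. finite K \<and> \<rho> (F - K) \<subseteq> {a. enat n \<le> g a})"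
    unfolding divergent_level_map_def by blast+
  show "\<forall>F\<in>FF. \<forall>x. \<not> rho_converges FF \<rho> euclidean g F x"
  proof (intro ballI allI notI)
    fix F x assume F: "F \<in> FF" and conv: "rho_converges FF \<rho> euclidean g F x"
    show False
    proof (cases x)
      case (enat m)
      then have "\<exists>K. finite K \<and> \<rho> (F - K) \<subseteq> g -` {enat m}"
        using conv by (simp add: rho_converges_enat_iff)
      then have "g -` {enat m} \<notin> ideal_of FF \<rho>" unfolding not_in_ideal_of_iff using F by blast
      then show False using fibers by blast
    next
      case infinity
      then have "\<forall>n. \<exists>K. finite K \<and> \<rho> (F - K) \<subseteq> {a. enat n \<le> g a}"
        using conv by (simp add: rho_converges_infinity_iff)
      then show False using F unbounded by blast
    qed
  qed
qed

lemma not_FinBW_enat_iff: "\<not> FinBW FF \<rho> (euclidean :: enat topology) \<longleftrightarrow> (\<exists>g. divergent_level_map g)"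
  unfolding FinBW_def nowhere_rho_convergent_iff_divergent_level_map[symmetric] by simp

lemma not_P_minus_iff: "\<not> P_minus FF \<rho> \<longleftrightarrow> (\<exists>g. divergent_level_map g)"
proof
  assume "\<not> P_minus FF \<rho>"
  then obtain A :: "nat \<Rightarrow> 'l set" where A: "A 0 = UNIV" "\<forall>n. A (Suc n) \<subseteq> A n"
    and diffs: "\<forall>n. A n - A (Suc n) \<in> ideal_of FF \<rho>"
    and no_F: "\<not> (\<exists>F\<in>FF. \<forall>n. \<exists>K. finite K \<and> \<rho> (F - K) \<subseteq> A n)"
    unfolding P_minus_def by blast
  have "decseq A" using A(2) by (simp add: decseq_Suc_iff)
  then have levels: "{a. enat n \<le> seq_depth A a} = A n" for n
    using enat_le_seq_depth_iff[where A=A, OF A(1)] by blast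
  have "divergent_level_map (seq_depth A)"
    unfolding divergent_level_map_def levels level_sets_diff_eq_fiber[symmetric] using diffs no_F by simp
  then show "\<exists>g. divergent_level_map g" by blast
next
  assume "\<exists>g. divergent_level_map g"
  then obtain g where g: "divergent_level_map g" by blast
  define A where "A n = {a. enat n \<le> g a}" for n
  have "A 0 = UNIV" by (simp add: A_def zero_enat_def[symmetric])
  moreover have "A (Suc n) \<subseteq> A n" for n by (auto simp: A_def Suc_ile_eq)
  moreover have "A n - A (Suc n) \<in> ideal_of FF \<rho>" for n
    using g unfolding A_def level_sets_diff_eq_fiber divergent_level_map_def by blast
  moreover have "\<not> (\<exists>F\<in>FF. \<forall>n. \<exists>K. finite K \<and> \<rho> (F - K) \<subseteq> A n)"
    using g unfolding A_def divergent_level_map_def by blast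
  ultimately show "\<not> P_minus FF \<rho>" unfolding P_minus_def by blast
qed

lemma divergent_level_map_infinity_fiber:
  assumes "divergent_level_map g"
  shows "g -` {\<infinity>} \<in> ideal_of FF \<rho>"
  unfolding ideal_of_def
proof (intro CollectI ballI notI)
  fix F assume "F \<in> FF" "\<rho> F \<subseteq> g -` {\<infinity>}"
  then have "\<forall>n. \<exists>K. finite K \<and> \<rho> (F - K) \<subseteq> {a. enat n \<le> g a}"
    by (intro allI exI[of _ "{}"]) auto
  then show False using assms \<open>F \<in> FF\<close> unfolding divergent_level_map_def by blast
qed

lemma divergent_level_map_below:
  assumes "divergent_level_map g"
  shows "{a. g a < enat n} \<in> ideal_of FF \<rho>"
proof (induction n)
  case 0
  then show ?case using empty_in_ideal_of by (simp add: zero_enat_def[symmetric])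
next
  case (Suc n)
  have "x < enat (Suc n) \<longleftrightarrow> x < enat n \<or> x = enat n" for x by (cases x) auto
  then have "{a. g a < enat (Suc n)} = {a. g a < enat n} \<union> g -` {enat n}" by auto
  moreover have "g -` {enat n} \<in> ideal_of FF \<rho>" using assms unfolding divergent_level_map_def by blast
  ultimately show ?case using Suc.IH ideal_of_Un by simp
qed

text \<open>The level \<open>\<infinity>\<close> is rho-small, so it can be merged into level 0.\<close>
lemma divergent_level_map_finite_valued:
  assumes g: "divergent_level_map g"
  shows "\<exists>h. divergent_level_map (\<lambda>a. enat (h a))"
proof -
  define h where "h a = (case g a of enat n \<Rightarrow> n | \<infinity> \<Rightarrow> 0)" for a
  have "(\<lambda>a. enat (h a)) -` {enat n} \<subseteq> g -` {enat n} \<union> g -` {\<infinity>}" for n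
    unfolding h_def by (auto split: enat.splits)
  then have fibers: "(\<lambda>a. enat (h a)) -` {enat n} \<in> ideal_of FF \<rho>" for n
    using g divergent_level_map_infinity_fiber[OF g] ideal_of_Un ideal_of_subset
    unfolding divergent_level_map_def by metis
  have below_g: "{a. enat n \<le> enat (h a)} \<subseteq> {a. enat n \<le> g a}" for n
  proof
    fix a assume "a \<in> {a. enat n \<le> enat (h a)}"
    then have "enat n \<le> enat (h a)" by blast
    also have "\<dots> \<le> g a" unfolding h_def by (cases "g a") simp_all
    finally show "a \<in> {a. enat n \<le> g a}" by blast
  qed
  have unbounded: "\<not> (\<exists>F\<in>FF. \<forall>n. \<exists>K. finite K \<and> \<rho> (F - K) \<subseteq> {a. enat n \<le> enat (h a)})"
  proof
    assume "\<exists>F\<in>FF. \<forall>n. \<exists>K. finite K \<and> \<rho> (F - K) \<subseteq> {a. enat n \<le> enat (h a)}"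
    then obtain F where "F \<in> FF" "\<forall>n. \<exists>K. finite K \<and> \<rho> (F - K) \<subseteq> {a. enat n \<le> enat (h a)}"
      by blast
    then have "\<forall>n. \<exists>K. finite K \<and> \<rho> (F - K) \<subseteq> {a. enat n \<le> g a}" using below_g by (meson subset_trans)
    then show False using g \<open>F \<in> FF\<close> unfolding divergent_level_map_def by blast
  qed
  show ?thesis using fibers unbounded unfolding divergent_level_map_def by blast
qed

lemma not_FinBW_infinite_Hausdorff:
  fixes X :: "'x topology"
  assumes h: "divergent_level_map (\<lambda>a. enat (h a))"
    and X: "Hausdorff_space X" "infinite (topspace X)"
  shows "\<not> FinBW FF \<rho> X"
proof
  assume "FinBW FF \<rho> X"
  obtain N :: "nat \<Rightarrow> 'x set" and x
    where N: "\<And>n. openin X (N n)" and x_in_N: "\<And>m n. x m \<in> N n \<longleftrightarrow> m = n"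
    using Hausdorff_space_separated_sequence[OF X] by metis
  have x_top: "x n \<in> topspace X" for n using openin_subset[OF N, of n] x_in_N[of n n] by blast
  then have "(\<lambda>a. x (h a)) ` UNIV \<subseteq> topspace X" by auto
  then obtain F y where F: "F \<in> FF" "y \<in> topspace X"
    and conv: "rho_converges FF \<rho> X (\<lambda>a. x (h a)) F y"
    using \<open>FinBW FF \<rho> X\<close> unfolding FinBW_def by blast
  have near: "\<exists>K. finite K \<and> (\<lambda>a. x (h a)) ` \<rho> (F - K) \<subseteq> U" if "openin X U" "y \<in> U" for U
    using conv that unfolding rho_converges_def by blast
  show False
  proof (cases "y \<in> range x")
    case True
    then obtain m where "y = x m" by blast
    then obtain K where K: "finite K" "(\<lambda>a. x (h a)) ` \<rho> (F - K) \<subseteq> N m"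
      using near[OF N] x_in_N by blast
    then have "\<rho> (F - K) \<subseteq> (\<lambda>a. enat (h a)) -` {enat m}" using x_in_N by auto
    then have "(\<lambda>a. enat (h a)) -` {enat m} \<notin> ideal_of FF \<rho>"
      unfolding not_in_ideal_of_iff using F(1) K(1) by blast
    then show False using h unfolding divergent_level_map_def by blast
  next
    case False
    have "\<exists>K. finite K \<and> \<rho> (F - K) \<subseteq> {a. enat n \<le> enat (h a)}" for n
    proof -
      have "closedin X (x ` {..<n})" using x_top by (intro closedin_Hausdorff_finite[OF X(1)]) auto
      then have "openin X (topspace X - x ` {..<n})" by (simp add: openin_diff)
      moreover have "y \<in> topspace X - x ` {..<n}" using F(2) False by blast
      ultimately obtain K where K: "finite K" "(\<lambda>a. x (h a)) ` \<rho> (F - K) \<subseteq> topspace X - x ` {..<n}"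
        using near by blast
      then have "\<rho> (F - K) \<subseteq> {a. enat n \<le> enat (h a)}" by (auto simp: not_less[symmetric])
      then show ?thesis using K(1) by blast
    qed
    then show False using h F(1) unfolding divergent_level_map_def by blast
  qed
qed

definition FIN2_reduction :: "('l \<Rightarrow> nat \<times> nat) \<Rightarrow> bool" where
  "FIN2_reduction f \<longleftrightarrow>
     (\<forall>F\<in>FF. \<exists>Z\<in>FIN2_plus. \<forall>K. finite K \<longrightarrow> (\<exists>K'. finite K' \<and> Z - K' \<subseteq> f ` \<rho> (F - K)))"

lemma FIN2_reduction_column_fibers:
  assumes "FIN2_reduction f"
  shows "(\<lambda>a. enat (fst (f a))) -` {enat n} \<in> ideal_of FF \<rho>"
  unfolding ideal_of_def
proof (intro CollectI ballI notI)
  fix F assume F: "F \<in> FF" "\<rho> F \<subseteq> (\<lambda>a. enat (fst (f a))) -` {enat n}"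
  obtain Z K' where Z: "Z \<in> FIN2_plus" "finite K'" "Z - K' \<subseteq> f ` \<rho> (F - {})"
    using assms F(1) unfolding FIN2_reduction_def by blast
  have "\<forall>p\<in>Z - K'. fst p \<noteq> i" if "i \<ge> Suc n" for i
  proof
    fix p assume "p \<in> Z - K'"
    then obtain a where "a \<in> \<rho> F" "p = f a" using Z(3) by auto
    then show "fst p \<noteq> i" using F(2) that by auto
  qed
  then have "Z \<notin> FIN2_plus" using Z(2) by (intro not_FIN2_plus_if_cofinitely_off_columns) blast
  then show False using Z(1) by blast
qed

lemma FIN2_reduction_columns_unbounded:
  assumes f: "FIN2_reduction f" and F: "F \<in> FF"
  shows "\<not> (\<forall>n. \<exists>K. finite K \<and> \<rho> (F - K) \<subseteq> {a. n \<le> fst (f a)})"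
proof
  assume climbs: "\<forall>n. \<exists>K. finite K \<and> \<rho> (F - K) \<subseteq> {a. n \<le> fst (f a)}"
  obtain Z where Z: "Z \<in> FIN2_plus" "\<And>K. finite K \<Longrightarrow> \<exists>K'. finite K' \<and> Z - K' \<subseteq> f ` \<rho> (F - K)"
    using f F unfolding FIN2_reduction_def by blast
  have "\<exists>K'. finite K' \<and> (\<forall>p\<in>Z - K'. fst p \<noteq> i)" for i
  proof -
    obtain K where K: "finite K" "\<rho> (F - K) \<subseteq> {a. Suc i \<le> fst (f a)}" using climbs by blast
    obtain K' where K': "finite K'" "Z - K' \<subseteq> f ` \<rho> (F - K)" using Z(2)[OF K(1)] by blast
    have "\<forall>p\<in>Z - K'. fst p \<noteq> i"
    proof
      fix p assume "p \<in> Z - K'"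
      then obtain a where "a \<in> \<rho> (F - K)" "p = f a" using K'(2) by auto
      then show "fst p \<noteq> i" using K(2) by auto
    qed
    then show ?thesis using K'(1) by blast
  qed
  then have "Z \<notin> FIN2_plus" by (intro not_FIN2_plus_if_cofinitely_off_columns)
  then show False using Z(1) by blast
qed

lemma divergent_level_map_if_katetov_FIN2:
  assumes "katetov_le FIN2_plus (\<lambda>A. A) FF \<rho>"
  shows "\<exists>h. divergent_level_map (\<lambda>a. enat (h a))"
proof -
  obtain f where f: "FIN2_reduction f"
    using assms unfolding katetov_le_def FIN2_reduction_def by blast
  have "divergent_level_map (\<lambda>a. enat (fst (f a)))"
    unfolding divergent_level_map_def enat_ord_simps
    using FIN2_reduction_column_fibers[OF f] FIN2_reduction_columns_unbounded[OF f] by blast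
  then show ?thesis by (rule exI[of _ "\<lambda>a. fst (f a)"])
qed

section \<open>Katetov reductions of FIN2 under (S1)\<close>

definition tail_refines :: "'o set \<Rightarrow> 'o set \<Rightarrow> bool" where
  "tail_refines G F \<longleftrightarrow> (\<forall>K. finite K \<longrightarrow> (\<exists>L. finite L \<and> \<rho> (G - L) \<subseteq> \<rho> (F - K)))"

lemma tail_refines_trans:
  assumes "tail_refines G F" "tail_refines F H"
  shows "tail_refines G H"
  unfolding tail_refines_def
proof (intro allI impI)
  fix K :: "'o set" assume "finite K"
  then obtain L where L: "finite L" "\<rho> (F - L) \<subseteq> \<rho> (H - K)"
    using assms(2) unfolding tail_refines_def by blast
  then obtain M where "finite M" "\<rho> (G - M) \<subseteq> \<rho> (F - L)"
    using assms(1) unfolding tail_refines_def by blast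
  then show "\<exists>M. finite M \<and> \<rho> (G - M) \<subseteq> \<rho> (H - K)" using L(2) by blast
qed

lemma tail_refines_if_subset:
  assumes "G \<in> FF" "F \<in> FF" "G \<subseteq> F"
  shows "tail_refines G F"
  unfolding tail_refines_def
proof (intro allI impI)
  fix K :: "'o set" assume "finite K"
  then have "\<rho> (G - K) \<subseteq> \<rho> (F - K)" using assms by (intro rho_mono diff_finite_in_FF) auto
  then show "\<exists>L. finite L \<and> \<rho> (G - L) \<subseteq> \<rho> (F - K)" using \<open>finite K\<close> by blast
qed

lemma S1_refinement_within_levels:
  assumes S1: "S1 FF \<rho>" and h: "divergent_level_map (\<lambda>a. enat (h a))" and E: "E \<in> FF"
  obtains E' b where "E' \<in> FF" "tail_refines E' E" "escaping E'" "\<rho> E' \<subseteq> {a. n \<le> h a}"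
    "\<And>K. finite K \<Longrightarrow> \<not> \<rho> (E' - K) \<subseteq> {a. b \<le> h a}"
proof -
  obtain F where F: "F \<in> FF" "F \<subseteq> E"
    and S1F: "\<forall>A\<in>ideal_of FF \<rho>. \<exists>G\<in>FF. \<rho> G \<subseteq> \<rho> F - A \<and> tail_refines G F"
    using S1[unfolded S1_def, rule_format, OF E] unfolding tail_refines_def by blast
  have "{a. h a < n} \<in> ideal_of FF \<rho>" using divergent_level_map_below[OF h, of n] by simp
  then obtain G where G: "G \<in> FF" "\<rho> G \<subseteq> \<rho> F - {a. h a < n}" "tail_refines G F"
    using S1F by blast
  obtain E' where E': "E' \<in> FF" "E' \<subseteq> G" "escaping E'" using escaping_subset[OF G(1)] by blast
  obtain b where b: "\<forall>K. finite K \<longrightarrow> \<not> \<rho> (E' - K) \<subseteq> {a. b \<le> h a}"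
    using h E'(1) unfolding divergent_level_map_def enat_ord_simps by blast
  have "tail_refines E' E"
    using tail_refines_if_subset[OF E'(1) G(1) E'(2)] G(3) tail_refines_if_subset[OF F(1) E F(2)]
    by (blast intro: tail_refines_trans)
  moreover have "\<rho> E' \<subseteq> {a. n \<le> h a}"
    using rho_mono[OF E'(1) G(1) E'(2)] G(2) by (auto simp: not_less)
  ultimately show thesis using that E' b by blast
qed

lemma escaping_infinite_range:
  assumes E: "E \<in> FF" "escaping E" and p: "\<And>j. p j \<in> \<rho> (E - initial_segment j)"
  shows "infinite (range p)"
proof
  assume "finite (range p)"
  have "p j \<in> \<rho> E" for j using p rho_diff_subset[OF E(1) finite_initial_segment] by blast
  then have "\<forall>a\<in>range p. \<exists>K. finite K \<and> a \<notin> \<rho> (E - K)" using E(2) unfolding escaping_def by blast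
  then have "\<exists>K. \<forall>a\<in>range p. finite (K a) \<and> a \<notin> \<rho> (E - K a)" by (rule bchoice)
  then obtain K where K: "\<forall>a\<in>range p. finite (K a) \<and> a \<notin> \<rho> (E - K a)" by blast
  have "finite (\<Union>a\<in>range p. K a)" using \<open>finite (range p)\<close> K by blast
  then obtain j where j: "(\<Union>a\<in>range p. K a) \<subseteq> initial_segment j" by (rule finite_subset_initial_segment)
  then have "\<rho> (E - initial_segment j) \<subseteq> \<rho> (E - K (p j))"
    by (intro rho_diff_mono[OF E(1) finite_initial_segment]) blast
  then show False using p[of j] K by blast
qed

lemma tail_refines_point_outside:
  assumes "E \<in> FF" "tail_refines E F" "\<And>K. finite K \<Longrightarrow> \<not> \<rho> (E - K) \<subseteq> S" "finite K1" "finite K2"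
  obtains q where "q \<in> \<rho> (E - K1)" "q \<in> \<rho> (F - K2)" "q \<notin> S"
proof -
  obtain L where L: "finite L" "\<rho> (E - L) \<subseteq> \<rho> (F - K2)" using assms(2,5) unfolding tail_refines_def by blast
  have fin: "finite (L \<union> K1)" using L(1) assms(4) by simp
  then obtain q where q: "q \<in> \<rho> (E - (L \<union> K1))" "q \<notin> S" using assms(3) by blast
  have "\<rho> (E - (L \<union> K1)) \<subseteq> \<rho> (E - L)" "\<rho> (E - (L \<union> K1)) \<subseteq> \<rho> (E - K1)"
    using rho_diff_mono[OF assms(1) fin] by auto
  then show thesis using that q L(2) by blast
qed

lemma points_cofinitely_in_tails:
  assumes F: "F \<in> FF" and q: "\<And>k j. q k j \<in> \<rho> (F - initial_segment (max k j))" and "finite K"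
  shows "\<exists>K'. finite K' \<and> (\<Union>k. h ` range (q k)) - K' \<subseteq> h ` \<rho> (F - K)"
proof -
  obtain m where m: "K \<subseteq> initial_segment m" using finite_subset_initial_segment[OF \<open>finite K\<close>] by blast
  define K' where "K' = (\<lambda>(k, j). h (q k j)) ` ({..<m} \<times> {..<m})"
  have "(\<Union>k. h ` range (q k)) - K' \<subseteq> h ` \<rho> (F - K)"
  proof
    fix z assume z: "z \<in> (\<Union>k. h ` range (q k)) - K'"
    then obtain k j where kj: "z = h (q k j)" by blast
    have "m \<le> max k j"
    proof (rule ccontr)
      assume "\<not> m \<le> max k j"
      then have "z \<in> K'" unfolding K'_def kj by (intro image_eqI[of _ _ "(k, j)"]) auto
      then show False using z by blast
    qed
    then have "K \<subseteq> initial_segment (max k j)" using m initial_segment_mono by blast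
    then have "\<rho> (F - initial_segment (max k j)) \<subseteq> \<rho> (F - K)"
      by (rule rho_diff_mono[OF F finite_initial_segment])
    then show "z \<in> h ` \<rho> (F - K)" using q kj by blast
  qed
  moreover have "finite K'" unfolding K'_def by simp
  ultimately show ?thesis by blast
qed

lemma S1_refinement_sequence:
  assumes S1: "S1 FF \<rho>" and h: "divergent_level_map (\<lambda>a. enat (h a))" and F: "F \<in> FF"
  obtains E :: "nat \<Rightarrow> 'o set" and b :: "nat \<Rightarrow> nat"
  where "\<And>k. E k \<in> FF" "\<And>k. tail_refines (E k) F" "\<And>k. escaping (E k)"
    "\<And>k. \<rho> (E k) \<subseteq> {a. k \<le> h a}" "\<And>k K. finite K \<Longrightarrow> \<not> \<rho> (E k - K) \<subseteq> {a. b k \<le> h a}"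
proof -
  have "\<forall>k. \<exists>E' b. E' \<in> FF \<and> tail_refines E' F \<and> escaping E' \<and> \<rho> E' \<subseteq> {a. k \<le> h a} \<and>
      (\<forall>K. finite K \<longrightarrow> \<not> \<rho> (E' - K) \<subseteq> {a. b \<le> h a})"
  proof
    fix k
    obtain E' b where "E' \<in> FF" "tail_refines E' F" "escaping E'" "\<rho> E' \<subseteq> {a. k \<le> h a}"
      "\<And>K. finite K \<Longrightarrow> \<not> \<rho> (E' - K) \<subseteq> {a. b \<le> h a}"
      using S1_refinement_within_levels[OF S1 h F, where n=k] by blast
    then show "\<exists>E' b. E' \<in> FF \<and> tail_refines E' F \<and> escaping E' \<and> \<rho> E' \<subseteq> {a. k \<le> h a} \<and>
      (\<forall>K. finite K \<longrightarrow> \<not> \<rho> (E' - K) \<subseteq> {a. b \<le> h a})"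
      by blast
  qed
  then obtain E b where "\<forall>k. E k \<in> FF \<and> tail_refines (E k) F \<and> escaping (E k) \<and>
      \<rho> (E k) \<subseteq> {a. k \<le> h a} \<and> (\<forall>K. finite K \<longrightarrow> \<not> \<rho> (E k - K) \<subseteq> {a. b k \<le> h a})"
    unfolding choice_iff by blast
  then show thesis using that by blast
qed

text \<open>The reduction sends a to (level of a, code of a). For each k, infinitely many points of
  levels in [k, b k) that escape every finite set form one block of the witness in FIN2-plus.\<close>
lemma katetov_FIN2_if_S1:
  assumes S1: "S1 FF \<rho>" and h: "divergent_level_map (\<lambda>a. enat (h a))"
  shows "katetov_le FIN2_plus (\<lambda>A. A) FF \<rho>"
proof -
  define f where "f a = (h a, to_nat a)" for a
  have "inj f" by (simp add: inj_def f_def)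
  show ?thesis unfolding katetov_le_def
  proof (intro exI[of _ f] ballI)
    fix F assume F: "F \<in> FF"
    obtain E b where E: "\<And>k. E k \<in> FF" "\<And>k. tail_refines (E k) F" "\<And>k. escaping (E k)"
        "\<And>k. \<rho> (E k) \<subseteq> {a. k \<le> h a}"
      and b: "\<And>k K. finite K \<Longrightarrow> \<not> \<rho> (E k - K) \<subseteq> {a. b k \<le> h a}"
      using S1_refinement_sequence[OF S1 h F] by blast
    have "\<forall>k j. \<exists>q. q \<in> \<rho> (E k - initial_segment j) \<and> q \<in> \<rho> (F - initial_segment (max k j)) \<and>
        \<not> b k \<le> h q"
      using tail_refines_point_outside[OF E(1) E(2) b finite_initial_segment finite_initial_segment]
      by blast
    then obtain q where "\<forall>k j. q k j \<in> \<rho> (E k - initial_segment j) \<and>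
        q k j \<in> \<rho> (F - initial_segment (max k j)) \<and> \<not> b k \<le> h (q k j)"
      unfolding choice_iff by blast
    then have q: "\<And>k j. q k j \<in> \<rho> (E k - initial_segment j)"
      "\<And>k j. q k j \<in> \<rho> (F - initial_segment (max k j))" "\<And>k j. h (q k j) < b k"
      by (blast, blast, simp add: not_le)
    have "fst (f (q k j)) \<in> {k..<b k}" for k j
      using q(1,3) rho_diff_subset[OF E(1) finite_initial_segment] E(4) by (force simp: f_def)
    moreover have "infinite (f ` range (q k))" for k
      using escaping_infinite_range[OF E(1) E(3) q(1)] \<open>inj f\<close>
      by (simp add: finite_image_iff inj_on_subset)
    ultimately have "(\<Union>k. f ` range (q k)) \<in> FIN2_plus"
      by (intro FIN2_plus_if_infinite_blocks[where b=b]) auto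
    then show "\<exists>F2\<in>FIN2_plus. \<forall>K1. finite K1 \<longrightarrow> (\<exists>K2. finite K2 \<and> F2 - K2 \<subseteq> f ` \<rho> (F - K1))"
      using points_cofinitely_in_tails[OF F q(2)] by blast
  qed
qed

end

theorem theorem3p1:
  fixes FF :: "'o::countable set set" and \<rho> :: "'o set \<Rightarrow> 'l::countable set"
  assumes "infinite (UNIV :: 'o set)" and "infinite (UNIV :: 'l set)"
    and "infinite (UNIV :: 'x set)"
    and "partition_regular FF \<rho>"
  defines "c1 \<equiv> (\<forall>X :: 'x topology. Hausdorff_space X \<longrightarrow>
                    (FinBW FF \<rho> X \<longleftrightarrow> finite (topspace X)))"
    and "c2 \<equiv> \<not> FinBW FF \<rho> (euclidean :: enat topology)"
    and "c3 \<equiv> \<not> P_minus FF \<rho>"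
    and "c4 \<equiv> katetov_le FIN2_plus (\<lambda>A. A) FF \<rho>"
  shows "(c1 \<longleftrightarrow> c2) \<and> (c2 \<longleftrightarrow> c3) \<and> (c4 \<longrightarrow> c2) \<and> (S1 FF \<rho> \<longrightarrow> (c2 \<longleftrightarrow> c4))"
proof -
  interpret partition_regular_fun FF \<rho> by standard (rule assms(4))
  have c2_iff_levels: "c2 \<longleftrightarrow> (\<exists>h. divergent_level_map (\<lambda>a. enat (h a)))"
    unfolding c2_def not_FinBW_enat_iff using divergent_level_map_finite_valued by blast
  have c2_iff_c3: "c2 \<longleftrightarrow> c3"
    unfolding c2_def c3_def not_FinBW_enat_iff not_P_minus_iff ..
  have c1_if_c2: c1 if c2
  proof -
    obtain h where h: "divergent_level_map (\<lambda>a. enat (h a))" using \<open>c2\<close> c2_iff_levels by blast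
    show c1
      unfolding c1_def using FinBW_finite_topspace not_FinBW_infinite_Hausdorff[OF h] by blast
  qed
  have c2_if_c1: c2 if c1
  proof -
    obtain X :: "'x topology"
      where X: "Hausdorff_space X" "infinite (topspace X)" "(euclidean :: enat topology) homeomorphic_space X"
      using infinite_Hausdorff_copy_of_enat[OF assms(3)] by blast
    then have "\<not> FinBW FF \<rho> X" using \<open>c1\<close> unfolding c1_def by blast
    then show c2 unfolding c2_def using FinBW_homeomorphic_space[OF X(3)] by blast
  qed
  have c2_if_c4: c2 if c4
    using divergent_level_map_if_katetov_FIN2 that c2_iff_levels unfolding c4_def by blast
  have c4_if_c2: c4 if "S1 FF \<rho>" c2
    using katetov_FIN2_if_S1[OF that(1)] that(2) c2_iff_levels unfolding c4_def by blast
  show ?thesis using c2_iff_c3 c1_if_c2 c2_if_c1 c2_if_c4 c4_if_c2 by blast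
qed

end
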